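(* For every finite connected chordal graph $G$, the set $C^1(G)=\{v: e(v)\le\operatorname{rad}(G)+1\}$ is a tight upper certificate of $G$, i.e. $e(u)=\min_{x\in C^1(G)}(d(u,x)+e(x))$ for every vertex $u$.
   Context: A graph is chordal if every induced cycle of length at least 4 has a chord. $d$ shortest-path distance, $e(v)=\max_u d(v,u)$, $\operatorname{rad}(G)=\min_v e(v)$. *)

theory Defs
  imports Main
begin

definition fin_graph :: "'a set \<Rightarrow> ('a \<Rightarrow> 'a \<Rightarrow> bool) \<Rightarrow> bool" where
  "fin_graph V E \<longleftrightarrow> finite V \<and>
     (\<forall>u v. E u v \<longrightarrow> u \<in> V \<and> v \<in> V \<and> u \<noteq> v \<and> E v u)"

definition walk :: "('a \<Rightarrow> 'a \<Rightarrow> bool) \<Rightarrow> 'a list \<Rightarrow> bool" where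
  "walk E xs \<longleftrightarrow> xs \<noteq> [] \<and> (\<forall>i. Suc i < length xs \<longrightarrow> E (xs ! i) (xs ! Suc i))"

definition connected_graph :: "'a set \<Rightarrow> ('a \<Rightarrow> 'a \<Rightarrow> bool) \<Rightarrow> bool" where
  "connected_graph V E \<longleftrightarrow> V \<noteq> {} \<and>
     (\<forall>u\<in>V. \<forall>v\<in>V. \<exists>xs. walk E xs \<and> hd xs = u \<and> last xs = v)"

text \<open>Chordal: every cycle of length at least 4 (distinct vertices
  v_0,...,v_{k-1} with v_i adjacent to v_{(i+1) mod k}) has a chord, i.e. an edge
  between two vertices that are not consecutive on the cycle.
  (Equivalently: no induced cycle of length at least 4.)\<close>
definition chordal :: "'a set \<Rightarrow> ('a \<Rightarrow> 'a \<Rightarrow> bool) \<Rightarrow> bool" where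
  "chordal V E \<longleftrightarrow>
     (\<forall>cs. distinct cs \<and> length cs \<ge> 4 \<and> set cs \<subseteq> V \<and>
        (\<forall>i < length cs. E (cs ! i) (cs ! ((i + 1) mod length cs)))
      \<longrightarrow> (\<exists>i < length cs. \<exists>j < length cs.
             j \<noteq> (i + 1) mod length cs \<and> i \<noteq> (j + 1) mod length cs \<and> i \<noteq> j \<and>
             E (cs ! i) (cs ! j)))"

definition gdist :: "('a \<Rightarrow> 'a \<Rightarrow> bool) \<Rightarrow> 'a \<Rightarrow> 'a \<Rightarrow> nat" where
  "gdist E u v = (LEAST n. \<exists>xs. walk E xs \<and> hd xs = u \<and> last xs = v \<and> length xs = Suc n)"

definition ecc :: "'a set \<Rightarrow> ('a \<Rightarrow> 'a \<Rightarrow> bool) \<Rightarrow> 'a \<Rightarrow> nat" where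
  "ecc V E v = Max ((gdist E v) ` V)"

definition rad :: "'a set \<Rightarrow> ('a \<Rightarrow> 'a \<Rightarrow> bool) \<Rightarrow> nat" where
  "rad V E = Min ((ecc V E) ` V)"

definition C1 :: "'a set \<Rightarrow> ('a \<Rightarrow> 'a \<Rightarrow> bool) \<Rightarrow> 'a set" where
  "C1 V E = {v \<in> V. ecc V E v \<le> rad V E + 1}"

end

theory Submission
  imports Defs
begin

(* In a chordal graph, two vertices of a sphere S_i(x) that are joined by a walk outside the
   ball B_i(x) are equal or adjacent: otherwise shortening this walk and a walk through the ball
   to induced paths would produce a chordless cycle of length at least 4. This gives the
   alpha_1-metric inequality d(u,v) + d(x,w) <= d(u,x) for every edge vw that leads away from u
   and towards x. With it one shows that every vertex y with e(y) >= rad + 2 has a neighbour of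
   smaller eccentricity: among the neighbours of y one step closer to a central vertex, one with
   the fewest vertices at distance e(y) has none at all. Descending along such neighbours from u
   into C^1 yields x with d(u,x) + e(x) <= e(u); the reverse inequality holds for every x. *)

lemma walk_singleton [simp]: "walk E [x]"
  by (simp add: walk_def)

lemma walk_Cons_Cons: "walk E (x # y # xs) \<longleftrightarrow> E x y \<and> walk E (y # xs)"
  unfolding walk_def by (auto simp: nth_Cons split: nat.splits)

lemma walk_append_tl:
  assumes "walk E xs" "walk E ys" "last xs = hd ys"
  shows "walk E (xs @ tl ys)"
  using assms
proof (induction xs)
  case Nil
  then show ?case by (simp add: walk_def)
next
  case (Cons x xs)
  then show ?case
    by (cases xs; cases ys) (auto simp: walk_Cons_Cons)
qed

lemma walk_rev:
  assumes "walk E xs" "\<And>a b. E a b \<Longrightarrow> E b a"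
  shows "walk E (rev xs)"
  using assms unfolding walk_def
  by (auto simp: rev_nth) (metis Suc_diff_Suc diff_Suc_less lessI less_trans_Suc zero_less_Suc Suc_lessD)

lemma walk_take:
  assumes "walk E xs" "0 < k"
  shows "walk E (take k xs)"
  using assms unfolding walk_def by auto

lemma walk_length_ge_3:
  assumes "walk E xs" "hd xs \<noteq> last xs" "\<not> E (hd xs) (last xs)"
  shows "3 \<le> length xs"
proof (rule ccontr)
  assume "\<not> 3 \<le> length xs"
  then consider "xs = []" | a where "xs = [a]" | a b where "xs = [a, b]"
    by (cases xs; cases "tl xs") (auto simp: Suc_le_eq)
  then show False
    using assms by cases (auto simp: walk_def walk_Cons_Cons)
qed

lemma walk_nth_edge: "walk E xs \<Longrightarrow> Suc i < length xs \<Longrightarrow> E (xs ! i) (xs ! Suc i)"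
  by (simp add: walk_def)

lemma glued_walks_nth:
  assumes "2 \<le> length P1" "2 \<le> length P2" "last P1 = hd P2"
  shows glued_walks_nth_left: "k < length P1 \<Longrightarrow> (P1 @ butlast (tl P2)) ! k = P1 ! k"
    and glued_walks_nth_right: "length P1 - 1 \<le> k \<Longrightarrow> k < length P1 + length P2 - 2 \<Longrightarrow>
      (P1 @ butlast (tl P2)) ! k = P2 ! (Suc k - length P1)"
proof -
  show "k < length P1 \<Longrightarrow> (P1 @ butlast (tl P2)) ! k = P1 ! k"
    by (simp add: nth_append)
  assume k: "length P1 - 1 \<le> k" "k < length P1 + length P2 - 2"
  show "(P1 @ butlast (tl P2)) ! k = P2 ! (Suc k - length P1)"
  proof (cases "k < length P1")
    case True
    then have "k = length P1 - 1" using k by simp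
    then show ?thesis
      using assms by (cases P1; cases P2) (auto simp: nth_append last_conv_nth)
  next
    case False
    then show ?thesis
      using k assms by (simp add: nth_append nth_butlast nth_tl Suc_diff_le)
  qed
qed

lemma glued_walks_cycle:
  assumes P1: "walk E P1" "3 \<le> length P1" and P2: "walk E P2" "3 \<le> length P2"
    and ends: "hd P1 = last P2" "last P1 = hd P2"
  defines "cs \<equiv> P1 @ butlast (tl P2)"
  shows "\<forall>i < length cs. E (cs ! i) (cs ! ((i + 1) mod length cs))"
proof (intro allI impI)
  fix i assume i: "i < length cs"
  have len: "length cs = length P1 + length P2 - 2"
    using P2 unfolding cs_def by simp
  note left = glued_walks_nth_left[of P1 P2, folded cs_def]
  note right = glued_walks_nth_right[of P1 P2, folded cs_def]
  consider "Suc i < length P1" | "length P1 \<le> Suc i" "Suc i < length cs" | "Suc i = length cs"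
    using i by linarith
  then show "E (cs ! i) (cs ! ((i + 1) mod length cs))"
  proof cases
    case 1
    then show ?thesis
      using P1 P2 ends len left walk_nth_edge[OF P1(1)] by simp
  next
    case 2
    then show ?thesis
      using P1 P2 ends len right walk_nth_edge[OF P2(1), of "Suc i - length P1"]
      by (simp add: Suc_diff_le)
  next
    case 3
    have "cs ! 0 = P2 ! (length P2 - 1)"
      using left[of 0] P1(2) P2(2) ends hd_conv_nth[of P1] last_conv_nth[of P2] by force
    also have "length P2 - 1 = Suc (i + 1 - length P1)"
      using 3 len P2 by simp
    finally have "cs ! 0 = P2 ! Suc (i + 1 - length P1)" .
    then show ?thesis
      using 3 P1 P2 ends len right walk_nth_edge[OF P2(1), of "i + 1 - length P1"]
      by (simp add: Suc_diff_le)
  qed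
qed

definition walk_via :: "('a \<Rightarrow> 'a \<Rightarrow> bool) \<Rightarrow> 'a set \<Rightarrow> 'a list \<Rightarrow> bool" where
  "walk_via E S P \<longleftrightarrow> walk E P \<and> (\<forall>k. 0 < k \<and> k < length P - 1 \<longrightarrow> P ! k \<in> S)"

definition induced_walk :: "('a \<Rightarrow> 'a \<Rightarrow> bool) \<Rightarrow> 'a list \<Rightarrow> bool" where
  "induced_walk E P \<longleftrightarrow> distinct P \<and>
     (\<forall>i j. i < j \<longrightarrow> j < length P \<longrightarrow> E (P ! i) (P ! j) \<longrightarrow> j = Suc i)"

lemma walk_via_interior: "walk_via E S P \<Longrightarrow> 0 < k \<Longrightarrow> k < length P - 1 \<Longrightarrow> P ! k \<in> S"
  by (simp add: walk_via_def)

lemma walk_via_append_tl: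
  assumes "walk_via E S xs" "walk_via E S ys" "last xs = hd ys" "last xs \<in> S"
  shows "walk_via E S (xs @ tl ys)"
  unfolding walk_via_def
proof (intro conjI allI impI)
  show "walk E (xs @ tl ys)"
    using assms walk_append_tl by (metis walk_via_def)
  fix k assume k: "0 < k \<and> k < length (xs @ tl ys) - 1"
  have ne: "xs \<noteq> []" "ys \<noteq> []"
    using assms by (auto simp: walk_via_def walk_def)
  consider "k < length xs - 1" | "k = length xs - 1" | "length xs \<le> k"
    by linarith
  then show "(xs @ tl ys) ! k \<in> S"
  proof cases
    case 1
    then have "(xs @ tl ys) ! k = xs ! k" by (simp add: nth_append less_diff_conv)
    then show ?thesis using 1 k assms(1) by (simp add: walk_via_def)
  next
    case 2
    then show ?thesis using ne assms(4) by (simp add: nth_append last_conv_nth)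
  next
    case 3
    then have "(xs @ tl ys) ! k = ys ! Suc (k - length xs)"
      using k ne by (cases ys) (simp_all add: nth_append)
    moreover have "Suc (k - length xs) < length ys - 1"
      using 3 k by auto
    ultimately show ?thesis
      using assms(2) by (simp add: walk_via_def)
  qed
qed

lemma walk_via_rev:
  assumes "walk_via E S P" "\<And>a b. E a b \<Longrightarrow> E b a"
  shows "walk_via E S (rev P)"
  unfolding walk_via_def
proof (intro conjI allI impI)
  show "walk E (rev P)"
    using assms walk_rev by (metis walk_via_def)
  fix k assume k: "0 < k \<and> k < length (rev P) - 1"
  then have "rev P ! k = P ! (length P - Suc k)" "0 < length P - Suc k" "length P - Suc k < length P - 1"
    by (auto simp: rev_nth)
  then show "rev P ! k \<in> S"
    using assms(1) by (simp add: walk_via_def)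
qed

lemma walk_via_shortcut:
  assumes P: "walk_via E S P" and ik: "Suc i < k" "k \<le> length P"
    and jump: "(k < length P \<and> E (P ! i) (P ! k)) \<or> (k = length P \<and> P ! i = last P)"
  defines "Q \<equiv> take (Suc i) P @ drop k P"
  shows "walk_via E S Q" "hd Q = hd P" "last Q = last P" "length Q < length P"
proof -
  have lenQ: "length Q = Suc i + (length P - k)"
    using ik unfolding Q_def by simp
  have nthQ: "Q ! m = (if m \<le> i then P ! m else P ! (m - Suc i + k))" for m
    using ik unfolding Q_def by (simp add: nth_append add.commute)
  have "walk E Q"
    unfolding walk_def
  proof (intro conjI allI impI)
    show "Q \<noteq> []" using lenQ by auto
    fix m assume m: "Suc m < length Q"
    consider "Suc m \<le> i" | "m = i" | "i < m" by linarith
    then show "E (Q ! m) (Q ! Suc m)"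
    proof cases
      case 1
      then show ?thesis using nthQ P ik walk_nth_edge[of E P m] by (simp add: walk_via_def)
    next
      case 2
      then show ?thesis using m lenQ nthQ jump by auto
    next
      case 3
      then obtain p where "m = Suc (i + p)" using less_iff_Suc_add by blast
      then have "Q ! m = P ! (p + k)" "Q ! Suc m = P ! Suc (p + k)" "Suc (p + k) < length P"
        using nthQ m lenQ by auto
      then show ?thesis using P walk_nth_edge by (metis walk_via_def)
    qed
  qed
  moreover have "Q ! m \<in> S" if "0 < m" "m < length Q - 1" for m
    using that nthQ lenQ ik walk_via_interior[OF P] by (cases "m \<le> i") auto
  ultimately show "walk_via E S Q"
    by (simp add: walk_via_def)
  show "hd Q = hd P"
    using ik unfolding Q_def by (cases P) auto
  show "last Q = last P"
    using jump ik unfolding Q_def by (auto simp: take_Suc_conv_app_nth)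
  show "length Q < length P"
    using lenQ ik by simp
qed

lemma exists_induced_walk_via:
  assumes "walk_via E S P" "hd P \<noteq> last P"
  obtains Q where "walk_via E S Q" "hd Q = hd P" "last Q = last P" "induced_walk E Q"
  using assms
proof (induction "length P" arbitrary: P rule: less_induct)
  case less
  show ?case
  proof (cases "induced_walk E P")
    case True
    then show ?thesis using less.prems by blast
  next
    case False
    then obtain i j where ij: "i < j" "j < length P" "P ! i = P ! j \<or> (E (P ! i) (P ! j) \<and> j \<noteq> Suc i)"
      unfolding induced_walk_def distinct_conv_nth by (metis linorder_neqE_nat)
    obtain k where k: "Suc i < k" "k \<le> length P"
      "(k < length P \<and> E (P ! i) (P ! k)) \<or> (k = length P \<and> P ! i = last P)"
    proof (cases "P ! i = P ! j")
      case True
      show ?thesis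
      proof (cases "Suc j < length P")
        case True
        then show ?thesis
          using that[of "Suc j"] walk_nth_edge[of E P j] less.prems(2) \<open>P ! i = P ! j\<close> ij
          by (simp add: walk_via_def)
      next
        case False
        then have "j = length P - 1" "P \<noteq> []" using ij by auto
        then have "P ! i = last P"
          using \<open>P ! i = P ! j\<close> ij by (simp add: last_conv_nth)
        then show ?thesis using that[of "length P"] ij by simp
      qed
    next
      case False
      then show ?thesis using that[of j] ij by simp
    qed
    note Q = walk_via_shortcut[OF less.prems(2) k]
    show ?thesis
      by (rule less.hyps[OF Q(4) _ Q(1)]) (use less.prems Q(2,3) in auto)
  qed
qed

lemma nth_mem_butlast_tl:
  assumes "0 < k" "k < length xs - 1"
  shows "xs ! k \<in> set (butlast (tl xs))"
proof -
  have "butlast (tl xs) ! (k - 1) = xs ! k"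
    using assms by (simp add: nth_butlast nth_tl)
  moreover have "k - 1 < length (butlast (tl xs))"
    using assms by simp
  ultimately show ?thesis by (metis nth_mem)
qed

lemma walk_via_interior_subset:
  assumes "walk_via E S P"
  shows "set (butlast (tl P)) \<subseteq> S"
proof
  fix v assume "v \<in> set (butlast (tl P))"
  then obtain k where "k < length (butlast (tl P))" "v = butlast (tl P) ! k"
    by (auto simp: in_set_conv_nth)
  then have "v = P ! Suc k" "0 < Suc k" "Suc k < length P - 1"
    by (auto simp: nth_butlast nth_tl)
  then show "v \<in> S" using walk_via_interior[OF assms] by simp
qed

lemma glued_induced_walks_no_chord:
  assumes P1: "3 \<le> length P1" "induced_walk E P1" and P2: "3 \<le> length P2" "induced_walk E P2"
    and ends: "hd P1 = last P2" "last P1 = hd P2"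
    and no_edge: "\<forall>a \<in> set (butlast (tl P1)). \<forall>b \<in> set (butlast (tl P2)). \<not> E a b"
    and sym: "\<And>a b. E a b \<Longrightarrow> E b a"
  defines "cs \<equiv> P1 @ butlast (tl P2)"
  assumes ab: "a < b" "b < length cs" "b \<noteq> Suc a" "\<not> (a = 0 \<and> b = length cs - 1)"
  shows "\<not> E (cs ! a) (cs ! b)"
proof
  assume chord: "E (cs ! a) (cs ! b)"
  have len: "length cs = length P1 + length P2 - 2"
    using P2 unfolding cs_def by simp
  have two: "2 \<le> length P1" "2 \<le> length P2"
    using P1 P2 by simp_all
  note left = glued_walks_nth_left[OF two ends(2), folded cs_def]
  note right = glued_walks_nth_right[OF two ends(2), folded cs_def]
  have no_chord: "j = Suc i" if "induced_walk E P" "i < j" "j < length P" "E (P ! i) (P ! j)" for P i j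
    using that by (simp add: induced_walk_def)
  consider "b < length P1" | "length P1 - 1 \<le> a" | "0 < a" "a < length P1 - 1" "length P1 \<le> b"
    | "a = 0" "length P1 \<le> b"
    by linarith
  then show False
  proof cases
    case 1
    then show False
      using chord ab P1 P2 ends left no_chord[OF P1(2), of a b] by simp
  next
    case 2
    then have "Suc a - length P1 < Suc b - length P1" "Suc b - length P1 < length P2"
      using ab len by auto
    moreover have "cs ! a = P2 ! (Suc a - length P1)" "cs ! b = P2 ! (Suc b - length P1)"
      using 2 ab len P1 P2 ends right by auto
    ultimately show False
      using 2 chord ab no_chord[OF P2(2), of "Suc a - length P1" "Suc b - length P1"]
      by auto
  next
    case 3
    have "0 < Suc b - length P1" "Suc b - length P1 < length P2 - 1"
      using 3 ab len by auto
    then have b_int: "cs ! b \<in> set (butlast (tl P2))"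
      using 3 ab P1 P2 ends len right nth_mem_butlast_tl[of "Suc b - length P1" P2] by auto
    moreover have "cs ! a \<in> set (butlast (tl P1))"
      using 3 left nth_mem_butlast_tl[of a P1] by auto
    then show False using b_int chord no_edge by blast
  next
    case 4
    have "cs ! a = P2 ! (length P2 - 1)"
      using 4 left[of 0] P1(1) P2(1) ends hd_conv_nth[of P1] last_conv_nth[of P2] by force
    then have "E (P2 ! (Suc b - length P1)) (P2 ! (length P2 - 1))"
      using chord sym 4 ab P1 P2 ends len right by auto
    moreover have "Suc b - length P1 < length P2 - 1"
      using 4 ab len by auto
    ultimately have "length P2 - 1 = Suc (Suc b - length P1)"
      using no_chord[OF P2(2), of "Suc b - length P1" "length P2 - 1"] by simp
    then show False
      using 4 ab len by linarith
  qed
qed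

lemma set_subset_hd_last_butlast_tl: "set xs \<subseteq> {hd xs, last xs} \<union> set (butlast (tl xs))"
proof (cases xs)
  case (Cons a ys)
  then show ?thesis
    by (cases ys rule: rev_cases) auto
qed simp

lemma first_index_with:
  assumes "\<not> Q (xs ! 0)" "Q (xs ! m)" "m < length xs"
  obtains k where "0 < k" "k < length xs" "Q (xs ! k)" "\<And>j. j < k \<Longrightarrow> \<not> Q (xs ! j)"
proof
  let ?k = "LEAST k. Q (xs ! k)"
  show "Q (xs ! ?k)" using assms(2) by (rule LeastI)
  show "\<not> Q (xs ! j)" if "j < ?k" for j using that by (rule not_less_Least)
  have "?k \<le> m" using assms(2) by (rule Least_le)
  then show "?k < length xs" using assms(3) by simp
  show "0 < ?k" using \<open>Q (xs ! ?k)\<close> assms(1) by (metis gr0I)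
qed

locale fin_connected_graph =
  fixes V :: "'a set" and E :: "'a \<Rightarrow> 'a \<Rightarrow> bool"
  assumes fin_graph: "fin_graph V E" and connected: "connected_graph V E"
begin

abbreviation d :: "'a \<Rightarrow> 'a \<Rightarrow> nat" where "d \<equiv> gdist E"

lemma finite_V: "finite V"
  using fin_graph by (simp add: fin_graph_def)

lemma V_nonempty: "V \<noteq> {}"
  using connected by (simp add: connected_graph_def)

lemma E_sym: "E u v \<Longrightarrow> E v u"
  using fin_graph by (simp add: fin_graph_def)

lemma E_endpoints: "E u v \<Longrightarrow> u \<in> V \<and> v \<in> V \<and> u \<noteq> v"
  using fin_graph by (simp add: fin_graph_def)

lemma walk_set_subset:
  assumes "walk E xs" "2 \<le> length xs"
  shows "set xs \<subseteq> V"
proof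
  fix v assume "v \<in> set xs"
  then obtain k where k: "k < length xs" "xs ! k = v"
    by (auto simp: in_set_conv_nth)
  show "v \<in> V"
  proof (cases "Suc k < length xs")
    case True
    then show ?thesis using assms k E_endpoints by (auto simp: walk_def)
  next
    case False
    then have "Suc (k - 1) < length xs" "k = Suc (k - 1)" using assms k by auto
    then have "E (xs ! (k - 1)) (xs ! k)" using assms(1) unfolding walk_def by metis
    then show ?thesis using k E_endpoints by blast
  qed
qed

lemma gdist_le_walk:
  assumes "walk E xs"
  shows "d (hd xs) (last xs) \<le> length xs - 1"
  unfolding gdist_def
proof (rule Least_le)
  show "\<exists>ys. walk E ys \<and> hd ys = hd xs \<and> last ys = last xs \<and> length ys = Suc (length xs - 1)"
    using assms by (intro exI[of _ xs]) (auto simp: walk_def)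
qed

lemma shortest_walk:
  assumes "u \<in> V" "v \<in> V"
  obtains xs where "walk E xs" "hd xs = u" "last xs = v" "length xs = Suc (d u v)"
proof -
  from connected assms obtain xs where xs: "walk E xs" "hd xs = u" "last xs = v"
    unfolding connected_graph_def by blast
  then have "\<exists>n ys. walk E ys \<and> hd ys = u \<and> last ys = v \<and> length ys = Suc n"
    by (intro exI[of _ "length xs - 1"] exI[of _ xs]) (auto simp: walk_def)
  then have "\<exists>ys. walk E ys \<and> hd ys = u \<and> last ys = v \<and> length ys = Suc (d u v)"
    unfolding gdist_def by (rule LeastI_ex)
  then show thesis using that by blast
qed

lemma gdist_self [simp]: "d u u = 0"
  using gdist_le_walk[of "[u]"] by simp

lemma gdist_eq_0_iff:
  assumes "u \<in> V" "v \<in> V"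
  shows "d u v = 0 \<longleftrightarrow> u = v"
proof
  assume "d u v = 0"
  obtain xs where "hd xs = u" "last xs = v" "length xs = Suc (d u v)"
    using shortest_walk[OF assms] by metis
  then show "u = v" using \<open>d u v = 0\<close> by (cases xs) auto
qed simp

lemma gdist_triangle:
  assumes "u \<in> V" "v \<in> V" "w \<in> V"
  shows "d u w \<le> d u v + d v w"
proof -
  obtain xs where xs: "walk E xs" "hd xs = u" "last xs = v" "length xs = Suc (d u v)"
    using shortest_walk[OF assms(1,2)] .
  obtain ys where ys: "walk E ys" "hd ys = v" "last ys = w" "length ys = Suc (d v w)"
    using shortest_walk[OF assms(2,3)] .
  have "walk E (xs @ tl ys)"
    using walk_append_tl xs ys by metis
  moreover have "hd (xs @ tl ys) = u" "last (xs @ tl ys) = w"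
    using xs ys by (cases xs; cases ys; auto simp: last_append)+
  ultimately show ?thesis
    using gdist_le_walk[of "xs @ tl ys"] xs ys by simp
qed

lemma gdist_sym:
  assumes "u \<in> V" "v \<in> V"
  shows "d u v = d v u"
proof -
  have "d a b \<le> d b a" if ab: "a \<in> V" "b \<in> V" for a b
  proof -
    obtain xs where xs: "walk E xs" "hd xs = b" "last xs = a" "length xs = Suc (d b a)"
      using shortest_walk[OF ab(2,1)] .
    moreover have "walk E (rev xs)"
      using walk_rev[OF xs(1)] E_sym by blast
    ultimately show ?thesis
      using gdist_le_walk[of "rev xs"] by (cases xs) (auto simp: hd_rev last_rev)
  qed
  then show ?thesis using assms by (meson le_antisym)
qed

lemma gdist_edge:
  assumes "E u v"
  shows "d u v = 1"
proof -
  have "walk E [u, v]" using assms by (simp add: walk_Cons_Cons)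
  then have "d u v \<le> 1" using gdist_le_walk[of "[u, v]"] by simp
  moreover have "d u v \<noteq> 0" using gdist_eq_0_iff E_endpoints assms by blast
  ultimately show ?thesis by simp
qed

lemma gdist_edge_le:
  assumes "x \<in> V" "E a b"
  shows "d x a \<le> d x b + 1"
  using gdist_triangle[OF assms(1), of b a] E_endpoints[OF assms(2)] gdist_edge[OF E_sym[OF assms(2)]]
  by simp

lemma gdist_Suc_neighbor:
  assumes "x \<in> V" "v \<in> V" "d x v = Suc n"
  obtains w where "E v w" "d x w = n"
proof -
  obtain xs where xs: "walk E xs" "hd xs = v" "last xs = x" "length xs = Suc (Suc n)"
    using shortest_walk[OF assms(2,1)] gdist_sym[OF assms(1,2)] assms(3) by metis
  then obtain w ys where ys: "xs = v # w # ys"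
    by (cases xs; cases "tl xs") auto
  have vw: "E v w" and "walk E (w # ys)"
    using xs ys by (simp_all add: walk_Cons_Cons)
  then have "d w x \<le> n"
    using gdist_le_walk[of "w # ys"] xs ys by (simp add: last_ConsR)
  moreover have "d w x = d x w"
    using gdist_sym assms(1) E_endpoints[OF vw] by simp
  moreover have "Suc n \<le> d x w + 1"
    using gdist_edge_le[OF assms(1) vw] assms(3) by simp
  ultimately show thesis using that vw by simp
qed

lemma gdist_1_iff_edge:
  assumes "u \<in> V" "v \<in> V"
  shows "d u v = 1 \<longleftrightarrow> E u v"
proof
  assume "d u v = 1"
  then obtain w where "E v w" "d u w = 0"
    using gdist_Suc_neighbor[OF assms] by (metis One_nat_def)
  then show "E u v"
    using gdist_eq_0_iff assms E_endpoints E_sym by metis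
qed (rule gdist_edge)

lemma gdist_le_index:
  assumes "walk E xs" "k < length xs"
  shows "d (hd xs) (xs ! k) \<le> k"
proof -
  have "walk E (take (Suc k) xs)"
    using walk_take assms by blast
  moreover have "hd (take (Suc k) xs) = hd xs" "last (take (Suc k) xs) = xs ! k"
    using assms(2) by (cases xs, simp_all add: take_Suc_conv_app_nth)
  ultimately show ?thesis
    using gdist_le_walk[of "take (Suc k) xs"] assms by simp
qed

lemma geodesic:
  assumes "x \<in> V" "v \<in> V"
  obtains G where "walk E G" "hd G = v" "last G = x" "length G = Suc (d x v)"
    "\<And>k. k < length G \<Longrightarrow> d x (G ! k) = d x v - k"
proof -
  have "\<exists>G. walk E G \<and> hd G = v \<and> last G = x \<and> length G = Suc n \<and>
      (\<forall>k < length G. d x (G ! k) = n - k)" if "v \<in> V" "d x v = n" for n v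
    using that
  proof (induction n arbitrary: v)
    case 0
    then have "v = x" using gdist_eq_0_iff assms(1) by blast
    then show ?case by (intro exI[of _ "[v]"]) simp
  next
    case (Suc n)
    obtain w where w: "E v w" "d x w = n"
      using gdist_Suc_neighbor[OF assms(1) Suc.prems] .
    then obtain G where G: "walk E G" "hd G = w" "last G = x" "length G = Suc n"
      "\<forall>k < length G. d x (G ! k) = n - k"
      using Suc.IH E_endpoints by blast
    then have "walk E (v # G)"
      using w by (cases G) (auto simp: walk_Cons_Cons)
    moreover have "\<forall>k < length (v # G). d x ((v # G) ! k) = Suc n - k"
      using G Suc.prems by (auto simp: nth_Cons split: nat.splits)
    ultimately show ?case
      using G by (intro exI[of _ "v # G"]) auto
  qed
  then show thesis using assms that by blast
qed

lemma geodesic_walk_via: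
  assumes "x \<in> V" "v \<in> V"
  obtains G where "walk_via E {g. d x g < d x v} G" "hd G = v" "last G = x"
proof -
  obtain G where G: "walk E G" "hd G = v" "last G = x" "length G = Suc (d x v)"
    "\<And>k. k < length G \<Longrightarrow> d x (G ! k) = d x v - k"
    using geodesic[OF assms] by blast
  then have "walk_via E {g. d x g < d x v} G"
    by (auto simp: walk_via_def)
  then show thesis using that G by blast
qed

lemma sphere_walk_via_ball:
  assumes "x \<in> V" "p \<in> V" "q \<in> V" "d x p = i" "d x q = i" "0 < i"
  obtains P where "walk_via E {g. d x g < i} P" "hd P = q" "last P = p"
proof -
  obtain Gq where Gq: "walk_via E {g. d x g < i} Gq" "hd Gq = q" "last Gq = x"
    using geodesic_walk_via[OF assms(1,3)] assms(5) by metis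
  obtain Gp where Gp: "walk_via E {g. d x g < i} Gp" "hd Gp = p" "last Gp = x"
    using geodesic_walk_via[OF assms(1,2)] assms(4) by metis
  have Gp_ne: "Gp \<noteq> []"
    using Gp by (auto simp: walk_via_def walk_def)
  have "tl (rev Gp) \<noteq> []"
    using Gp_ne Gp(2,3) assms(4,6) by (cases Gp rule: rev_cases) auto
  have "walk_via E {g. d x g < i} (Gq @ tl (rev Gp))"
    using walk_via_append_tl[OF Gq(1) walk_via_rev[OF Gp(1) E_sym]] Gq(3) Gp(3) Gp_ne assms(6)
    by (simp add: hd_rev)
  moreover have "hd (Gq @ tl (rev Gp)) = q"
    using Gq by (auto simp: walk_via_def walk_def)
  moreover have "last (Gq @ tl (rev Gp)) = p"
    using Gp(2) Gp_ne \<open>tl (rev Gp) \<noteq> []\<close> by (simp add: last_tl last_rev)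
  ultimately show thesis using that by blast
qed

lemma gdist_le_ecc: "z \<in> V \<Longrightarrow> d v z \<le> ecc V E v"
  unfolding ecc_def using finite_V by (intro Max_ge) auto

lemma ecc_le: "(\<And>z. z \<in> V \<Longrightarrow> d v z \<le> n) \<Longrightarrow> ecc V E v \<le> n"
  unfolding ecc_def using finite_V V_nonempty by (subst Max_le_iff) auto

lemma ecc_triangle:
  assumes "u \<in> V" "x \<in> V"
  shows "ecc V E u \<le> d u x + ecc V E x"
proof (rule ecc_le)
  fix z assume z: "z \<in> V"
  have "d u z \<le> d u x + d x z" using gdist_triangle[OF assms z] .
  also have "\<dots> \<le> d u x + ecc V E x" using gdist_le_ecc[OF z] by simp
  finally show "d u z \<le> d u x + ecc V E x" .
qed

lemma rad_attained: obtains c where "c \<in> V" "ecc V E c = rad V E"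
proof -
  have "Min (ecc V E ` V) \<in> ecc V E ` V"
    using finite_V V_nonempty by (intro Min_in) auto
  then show thesis using that unfolding rad_def by auto
qed

end

locale chordal_graph = fin_connected_graph +
  assumes chordal: "chordal V E"
begin

lemma no_chordless_glued_induced_walks:
  assumes P1: "walk E P1" "3 \<le> length P1" "induced_walk E P1"
    and P2: "walk E P2" "3 \<le> length P2" "induced_walk E P2"
    and ends: "hd P1 = last P2" "last P1 = hd P2"
    and disjoint: "set P1 \<inter> set (butlast (tl P2)) = {}"
    and no_edge: "\<forall>a \<in> set (butlast (tl P1)). \<forall>b \<in> set (butlast (tl P2)). \<not> E a b"
  shows False
proof -
  define cs where "cs = P1 @ butlast (tl P2)"
  have "distinct cs"
    using P1(3) P2(3) disjoint unfolding cs_def induced_walk_def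
    by (simp add: distinct_butlast distinct_tl)
  moreover have "4 \<le> length cs"
    using P1 P2 unfolding cs_def by simp
  moreover have "set cs \<subseteq> V"
    using walk_set_subset[OF P1(1)] walk_set_subset[OF P2(1)] P1(2) P2(2) unfolding cs_def
    by (auto dest!: in_set_butlastD list.set_sel(2)[rotated])
  moreover have "\<forall>i < length cs. E (cs ! i) (cs ! ((i + 1) mod length cs))"
    using glued_walks_cycle[OF P1(1,2) P2(1,2) ends] unfolding cs_def .
  ultimately obtain i j where ij: "i < length cs" "j < length cs" "i \<noteq> j"
    "j \<noteq> (i + 1) mod length cs" "i \<noteq> (j + 1) mod length cs" "E (cs ! i) (cs ! j)"
    using chordal unfolding chordal_def by blast
  have "\<not> E (cs ! a) (cs ! b)"
    if "a < b" "b < length cs" "b \<noteq> (a + 1) mod length cs" "a \<noteq> (b + 1) mod length cs" for a b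
  proof (rule glued_induced_walks_no_chord[OF P1(2,3) P2(2,3) ends no_edge E_sym, folded cs_def])
    show "b \<noteq> Suc a" "\<not> (a = 0 \<and> b = length cs - 1)"
      using that by (auto simp: mod_if split: if_splits)
  qed (use that in auto)
  then show False
    using ij E_sym by (metis linorder_neqE_nat)
qed

lemma sphere_vertices_adjacent:
  assumes x: "x \<in> V" and p: "p \<in> V" and q: "q \<in> V" and dp: "d x p = i" and dq: "d x q = i"
    and P: "walk_via E {g. i < d x g} P" "hd P = p" "last P = q"
  shows "p = q \<or> E p q"
proof (rule ccontr)
  assume "\<not> (p = q \<or> E p q)"
  then have pq: "p \<noteq> q" "\<not> E p q" "\<not> E q p" using E_sym by auto
  then have "0 < i"
    using x p q dp dq gdist_eq_0_iff by (metis gr0I)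
  obtain P1 where P1: "walk_via E {g. i < d x g} P1" "hd P1 = p" "last P1 = q" "induced_walk E P1"
    using exists_induced_walk_via[OF P(1)] P(2,3) pq(1) by metis
  obtain P0 where "walk_via E {g. d x g < i} P0" "hd P0 = q" "last P0 = p"
    using sphere_walk_via_ball[OF x p q dp dq \<open>0 < i\<close>] .
  then obtain P2 where P2: "walk_via E {g. d x g < i} P2" "hd P2 = q" "last P2 = p" "induced_walk E P2"
    using exists_induced_walk_via pq(1) by metis
  have walks: "walk E P1" "walk E P2"
    using P1(1) P2(1) by (simp_all add: walk_via_def)
  have upper: "set (butlast (tl P1)) \<subseteq> {g. i < d x g}" and lower: "set (butlast (tl P2)) \<subseteq> {g. d x g < i}"
    using walk_via_interior_subset P1(1) P2(1) by blast+
  show False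
  proof (rule no_chordless_glued_induced_walks)
    show "3 \<le> length P1" "3 \<le> length P2"
      using walk_length_ge_3 walks P1(2,3) P2(2,3) pq by metis+
    have "set P1 \<subseteq> {g. i \<le> d x g}"
      using set_subset_hd_last_butlast_tl[of P1] upper P1(2,3) dp dq by fastforce
    then show "set P1 \<inter> set (butlast (tl P2)) = {}"
      using lower by fastforce
    show "\<forall>a \<in> set (butlast (tl P1)). \<forall>b \<in> set (butlast (tl P2)). \<not> E a b"
      using upper lower gdist_edge_le[OF x] by fastforce
  qed (use walks P1 P2 in auto)
qed

lemma walk_into_ball_meets_neighbor:
  assumes x: "x \<in> V" and L: "walk E L" "E w (L ! 0)" "d x w < d x (L ! 0)"
    and reach: "m < length L" "d x (L ! m) \<le> d x w"
  obtains k where "k < length L" "d x (L ! k) = d x w" "L ! k = w \<or> E w (L ! k)"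
proof -
  have w: "w \<in> V" using E_endpoints[OF L(2)] by simp
  obtain k where k: "0 < k" "k < length L" "d x (L ! k) \<le> d x w"
    and before: "\<And>j. j < k \<Longrightarrow> \<not> d x (L ! j) \<le> d x w"
    by (rule first_index_with[of "\<lambda>y. d x y \<le> d x w" L m]) (use L(3) reach in auto)
  have edge: "E (L ! (k - 1)) (L ! k)"
    using walk_nth_edge[OF L(1), of "k - 1"] k by simp
  then have dist: "d x (L ! k) = d x w"
    using before[of "k - 1"] gdist_edge_le[OF x] k(1,3) by fastforce
  have "walk_via E {g. d x w < d x g} (w # take (Suc k) L)"
  proof -
    have "take (Suc k) L = L ! 0 # tl (take (Suc k) L)"
      using k(2) by (cases L) auto
    then have "walk E (w # take (Suc k) L)"
      using walk_take[OF L(1)] L(2) by (metis walk_Cons_Cons zero_less_Suc)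
    moreover have "(w # take (Suc k) L) ! j \<in> {g. d x w < d x g}"
      if "0 < j" "j < length (w # take (Suc k) L) - 1" for j
      using that before[of "j - 1"] by (cases j) auto
    ultimately show ?thesis by (simp add: walk_via_def)
  qed
  then have "w = L ! k \<or> E w (L ! k)"
    using sphere_vertices_adjacent[OF x w, of "L ! k" "d x w"] E_endpoints[OF edge] dist k(2)
    by (simp add: take_Suc_conv_app_nth)
  then show thesis
    using that k(2) dist by blast
qed

lemma alpha1_metric:
  assumes u: "u \<in> V" and x: "x \<in> V" and vw: "E v w"
    and uw: "d u w = d u v + 1" and xv: "d x v = d x w + 1"
  shows "d u v + d x w \<le> d u x"
proof -
  have v: "v \<in> V" using E_endpoints[OF vw] by simp
  obtain H where H: "walk E H" "hd H = v" "last H = u" "length H = Suc (d u v)"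
    "\<And>k. k < length H \<Longrightarrow> d u (H ! k) = d u v - k"
    using geodesic[OF u v] by blast
  obtain G where G: "walk E G" "hd G = u" "last G = x" "length G = Suc (d x u)"
    "\<And>k. k < length G \<Longrightarrow> d x (G ! k) = d x u - k"
    using geodesic[OF x u] by blast
  define L where "L = H @ tl G"
  have L: "walk E L" "length L = Suc (d u v + d x u)"
    using walk_append_tl[OF H(1) G(1)] H G unfolding L_def by simp_all
  have L_nth: "L ! k = (if k \<le> d u v then H ! k else G ! (k - d u v))" if "k < length L" for k
    using that H G by (cases G) (auto simp: L_def nth_append not_le)
  have "L ! 0 = v"
    using H L_nth[of 0] L(2) by (cases H) auto
  have "last L = x"
    using H G unfolding L_def by (cases G) (auto simp: walk_def last_append)
  then have "L ! (length L - 1) = x"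
    using L(2) last_conv_nth[of L] by fastforce
  then obtain k where k: "k < length L" "d x (L ! k) = d x w" "L ! k = w \<or> E w (L ! k)"
    using walk_into_ball_meets_neighbor[OF x L(1), of w "length L - 1"] \<open>L ! 0 = v\<close> E_sym[OF vw] xv L(2)
    by auto
  then have near_w: "d u w \<le> d u (L ! k) + 1"
    using gdist_edge_le[OF u] by auto
  have "k \<noteq> 0"
    using k(2) \<open>L ! 0 = v\<close> xv by (metis n_not_Suc_n Suc_eq_plus1)
  show ?thesis
  proof (cases "k \<le> d u v")
    case True
    then show ?thesis
      using near_w L_nth k \<open>k \<noteq> 0\<close> H(4,5) uw by simp
  next
    case False
    then have f: "L ! k = G ! (k - d u v)" "k - d u v < length G"
      using L_nth k L(2) G(4) by auto
    then have "d u (L ! k) \<le> k - d u v"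
      using gdist_le_index[OF G(1)] G(2) by simp
    moreover have "d x (L ! k) = d x u - (k - d u v)"
      using f G(5) by simp
    ultimately show ?thesis
      using near_w k(2) uw gdist_sym[OF u x] f(2) G(4) by linarith
  qed
qed

lemma alpha1_gdist_le:
  assumes c: "c \<in> V" and z: "z \<in> V" and yw: "E y w"
    and cy: "d c y = d c w + 1" and cz: "d c z < d c w + d y z"
  shows "d w z \<le> d y z"
proof (rule ccontr)
  have w: "w \<in> V" and y: "y \<in> V" using E_endpoints[OF yw] by auto
  assume "\<not> d w z \<le> d y z"
  then have "d z w = d z y + 1"
    using gdist_edge_le[OF z E_sym[OF yw]] gdist_sym[OF z w] gdist_sym[OF z y] by simp
  then have "d c w + d z y \<le> d c z"
    using alpha1_metric[OF c z E_sym[OF yw] cy] by simp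
  then show False
    using cz gdist_sym[OF z y] by simp
qed

lemma common_lower_neighbor:
  assumes z: "z \<in> V" and yw: "E y w" and zy: "d z y = Suc j" and zw: "d z w = Suc j"
  obtains s where "E y s" "E w s" "d z s = j"
proof (rule ccontr)
  assume no_common: "\<not> thesis"
  have y: "y \<in> V" and w: "w \<in> V" using E_endpoints[OF yw] by auto
  obtain a where a: "E y a" "d z a = j" using gdist_Suc_neighbor[OF z y zy] .
  obtain b where b: "E w b" "d z b = j" using gdist_Suc_neighbor[OF z w zw] .
  have aV: "a \<in> V" and bV: "b \<in> V" using a b E_endpoints by auto
  have not_wa: "\<not> E w a" and not_yb: "\<not> E y b"
    using no_common that a b E_sym by blast+
  have "walk_via E {g. j < d z g} [a, y, w, b]"
    using a b yw zy zw E_sym by (auto simp: walk_via_def walk_Cons_Cons nth_Cons split: nat.splits)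
  then have "a = b \<or> E a b"
    using sphere_vertices_adjacent[OF z aV bV a(2) b(2)] by simp
  then have ab: "E a b"
    using not_wa b(1) by auto
  have "d y b \<noteq> 0" "d y b \<noteq> 1"
    using gdist_eq_0_iff[OF y bV] gdist_1_iff_edge[OF y bV] b(2) zy not_yb by auto
  then have "walk_via E {g. 1 < d y g} [a, b, w]"
    using ab b E_sym by (auto simp: walk_via_def walk_Cons_Cons nth_Cons split: nat.splits)
  moreover have "a \<noteq> w"
    using a(2) zw by auto
  ultimately show False
    using sphere_vertices_adjacent[OF y aV w gdist_edge[OF a(1)] gdist_edge[OF yw]] not_wa E_sym
    by auto
qed

lemma far_vertex_of_centerward_neighbor:
  assumes c: "c \<in> V" and gap: "ecc V E c + 2 \<le> ecc V E y"
    and yw: "E y w" "d c w + 1 = d c y" and z: "z \<in> V" "ecc V E y \<le> d w z"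
  shows "d w z = ecc V E y" "d y z = ecc V E y"
proof -
  have y: "y \<in> V" using E_endpoints[OF yw(1)] by simp
  have "d c z \<le> ecc V E c" "d y z \<le> ecc V E y"
    using gdist_le_ecc z by auto
  moreover have "d w z \<le> d y z + 1"
    using gdist_edge_le[OF z(1) E_sym[OF yw(1)]] gdist_sym[OF z(1)] E_endpoints[OF yw(1)] by simp
  ultimately have "d w z \<le> d y z"
    using alpha1_gdist_le[OF c z(1) yw(1)] yw(2) gap z(2) by simp
  then show "d w z = ecc V E y" "d y z = ecc V E y"
    using \<open>d y z \<le> ecc V E y\<close> z(2) by simp_all
qed

lemma far_set_shrinks:
  assumes c: "c \<in> V" and gap: "ecc V E c + 2 \<le> ecc V E y"
    and yw: "E y w" "d c w + 1 = d c y" and z0: "z0 \<in> V" "ecc V E y \<le> d w z0"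
  obtains s where "E y s" "d c s + 1 = d c y"
    "{z \<in> V. ecc V E y \<le> d s z} \<subseteq> {z \<in> V. ecc V E y \<le> d w z} - {z0}"
proof -
  let ?j = "ecc V E y"
  have y: "y \<in> V" and w: "w \<in> V" using E_endpoints[OF yw(1)] by auto
  note far = far_vertex_of_centerward_neighbor[OF c gap]
  have "d z0 y = Suc (?j - 1)" "d z0 w = Suc (?j - 1)"
    using far[OF yw z0] gap gdist_sym[OF z0(1)] y w by auto
  then obtain s where s: "E y s" "E w s" "d z0 s = ?j - 1"
    using common_lower_neighbor[OF z0(1) yw(1)] by metis
  have sV: "s \<in> V" using E_endpoints[OF s(1)] by simp
  have "d c y \<le> d c s + 1" "d c s \<le> d c w + 1"
    using gdist_edge_le[OF c] s(1) E_sym[OF s(2)] by auto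
  moreover have "d c s \<noteq> d c w + 1"
  proof
    assume "d c s = d c w + 1"
    then have "d w z0 \<le> d s z0"
      using alpha1_gdist_le[OF c z0(1) E_sym[OF s(2)]] gdist_le_ecc[OF z0(1), of c] gap s(3)
        gdist_sym[OF z0(1) sV] yw(2) by simp
    then show False
      using far[OF yw z0] s(3) gdist_sym[OF z0(1) sV] gap by simp
  qed
  ultimately have cs: "d c s + 1 = d c y"
    using yw(2) by simp
  have "z \<in> V \<and> ?j \<le> d w z \<and> z \<noteq> z0" if z: "z \<in> V" "?j \<le> d s z" for z
  proof (intro conjI)
    have sz: "d s z = ?j" using far[OF s(1) cs z] by simp
    then show "z \<noteq> z0" using s(3) gap gdist_sym[OF z0(1) sV] by auto
    show "?j \<le> d w z"
    proof (rule ccontr)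
      assume "\<not> ?j \<le> d w z"
      moreover have "d s z \<le> d w z + 1"
        using gdist_edge_le[OF z(1) E_sym[OF s(2)]] gdist_sym[OF z(1)] sV w by simp
      moreover have "d z0 z \<le> 2 * ecc V E c"
        using gdist_triangle[OF z0(1) c z(1)] gdist_le_ecc[OF z0(1), of c] gdist_le_ecc[OF z(1), of c]
          gdist_sym[OF z0(1) c] by simp
      ultimately have "d z0 z < d z0 s + d w z"
        using s(3) sz gap by linarith
      moreover have "d z0 w = d z0 s + 1"
        using far[OF yw z0] s(3) gap gdist_sym[OF z0(1) w] by simp
      ultimately have "d s z \<le> d w z"
        using alpha1_gdist_le[OF z0(1) z(1) s(2)] by simp
      then show False using sz \<open>\<not> ?j \<le> d w z\<close> by simp
    qed
  qed (use z in simp)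
  then show thesis
    using that s(1) cs by blast
qed

lemma ecc_decreasing_neighbor:
  assumes c: "c \<in> V" and y: "y \<in> V" and gap: "ecc V E c + 2 \<le> ecc V E y"
  obtains w where "E y w" "ecc V E w < ecc V E y"
proof -
  let ?far = "\<lambda>w. {z \<in> V. ecc V E y \<le> d w z}"
  have "ecc V E y \<le> d y c + ecc V E c"
    using ecc_triangle[OF y c] .
  then have "d c y = Suc (d c y - 1)"
    using gap gdist_sym[OF y c] by simp
  then obtain w0 where "E y w0" "d c w0 + 1 = d c y"
    using gdist_Suc_neighbor[OF c y] by (metis Suc_eq_plus1)
  then have "\<exists>w. (E y w \<and> d c w + 1 = d c y) \<and>
      (\<forall>w'. E y w' \<and> d c w' + 1 = d c y \<longrightarrow> card (?far w) \<le> card (?far w'))"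
    by (intro ex_has_least_nat) simp
  then obtain w where w: "E y w" "d c w + 1 = d c y"
    and w_min: "\<And>w'. E y w' \<Longrightarrow> d c w' + 1 = d c y \<Longrightarrow> card (?far w) \<le> card (?far w')"
    by blast
  have "?far w = {}"
  proof (rule ccontr)
    assume "?far w \<noteq> {}"
    then obtain z0 where z0: "z0 \<in> ?far w" by blast
    then obtain s where s: "E y s" "d c s + 1 = d c y" "?far s \<subseteq> ?far w - {z0}"
      using far_set_shrinks[OF c gap w] by blast
    have fin: "finite (?far w)"
      using finite_V by simp
    have "card (?far s) \<le> card (?far w - {z0})"
      using fin s(3) by (intro card_mono) auto
    also have "\<dots> < card (?far w)"
      using card_Diff1_less[OF fin z0] .
    finally show False
      using w_min[OF s(1,2)] by simp
  qed
  have "ecc V E w \<le> ecc V E y - 1"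
  proof (rule ecc_le)
    fix z assume "z \<in> V"
    then have "d w z < ecc V E y"
      using \<open>?far w = {}\<close> by auto
    then show "d w z \<le> ecc V E y - 1" by simp
  qed
  then show thesis
    using that w(1) gap by simp
qed

lemma C1_certificate_exists:
  "u \<in> V \<Longrightarrow> \<exists>x \<in> C1 V E. d u x + ecc V E x \<le> ecc V E u"
proof (induction "ecc V E u" arbitrary: u rule: less_induct)
  case less
  show ?case
  proof (cases "ecc V E u \<le> rad V E + 1")
    case True
    then show ?thesis
      using less.prems by (intro bexI[of _ u]) (simp_all add: C1_def)
  next
    case False
    obtain c where c: "c \<in> V" "ecc V E c = rad V E"
      using rad_attained .
    obtain w where w: "E u w" "ecc V E w < ecc V E u"
      using ecc_decreasing_neighbor[OF c(1) less.prems] c(2) False by auto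
    have wV: "w \<in> V" using E_endpoints[OF w(1)] by simp
    obtain x where x: "x \<in> C1 V E" "d w x + ecc V E x \<le> ecc V E w"
      using less.hyps[OF w(2) wV] by blast
    have "d u x \<le> d u w + d w x"
      using gdist_triangle[OF less.prems wV] x(1) by (simp add: C1_def)
    then show ?thesis
      using x gdist_edge[OF w(1)] w(2) by (intro bexI[of _ x]) simp_all
  qed
qed

end

theorem proposition9:
  fixes V :: "'a set" and E :: "'a \<Rightarrow> 'a \<Rightarrow> bool"
  assumes "fin_graph V E" and "connected_graph V E" and "chordal V E"
  shows "\<forall>u\<in>V. ecc V E u = Min ((\<lambda>x. gdist E u x + ecc V E x) ` C1 V E)"
proof
  interpret chordal_graph V E
    using assms by unfold_locales auto
  fix u assume u: "u \<in> V"
  have lower: "ecc V E u \<le> gdist E u x + ecc V E x" if "x \<in> C1 V E" for x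
    using ecc_triangle[OF u] that by (simp add: C1_def)
  obtain x where x: "x \<in> C1 V E" "gdist E u x + ecc V E x \<le> ecc V E u"
    using C1_certificate_exists[OF u] by blast
  then have "gdist E u x + ecc V E x = ecc V E u"
    using lower[OF x(1)] by simp
  then have "ecc V E u \<in> (\<lambda>x. gdist E u x + ecc V E x) ` C1 V E"
    using x(1) by force
  moreover have "finite (C1 V E)"
    using finite_V by (simp add: C1_def)
  ultimately show "ecc V E u = Min ((\<lambda>x. gdist E u x + ecc V E x) ` C1 V E)"
    using lower by (intro Min_eqI[symmetric]) auto
qed

end
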